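(* Let $(A,\cdot)$ be a commutative associative algebra, $\circ:A\otimes A\to A$ a bilinear operation, and define $x\star y=x\circ y-2y\circ x$. Then the identities $$2(x\circ y)\cdot z-2(y\circ x)\cdot z=y\cdot(x\circ z)-x\cdot(y\circ z),\qquad 2x\circ(y\cdot z)=(z\cdot x)\circ y+z\cdot(x\circ y)\quad(\forall x,y,z\in A)$$ hold if and only if the identities $$(x\cdot y)\star z=x\cdot(y\star z),\qquad (x\star y)\cdot z-(y\star x)\cdot z=x\star(y\cdot z)-y\star(x\cdot z)\quad(\forall x,y,z\in A)$$ hold. In particular, $(A,\cdot,\circ)$ is an admissible Novikov-Poisson algebra if and only if $(A,\cdot,\star)$ is a Novikov-Poisson algebra.
   Context: All vector spaces are finite-dimensional over a field $\mathbb F$ of characteristic $0$. For a bilinear operation $\circ$ write $[x,y]=x\circ y-y\circ x$. An anti-pre-Lie algebra is $(A,\circ)$ with $x\circ(y\circ z)-y\circ(x\circ z)=[y,x]\circ z$ and $[x,y]\circ z+[y,z]\circ x+[z,x]\circ y=0$; an admissible Novikov algebra is $(A,\circ)$ with $x\circ(y\circ z)-y\circ(x\circ z)=[y,x]\circ z$ and $2x\circ[y,z]=(x\circ y)\circ z-(x\circ z)\circ y$ (it is automatically anti-pre-Lie). An anti-pre-Lie Poisson algebra is $(A,\cdot,\circ)$ with $(A,\cdot)$ commutative associative, $(A,\circ)$ anti-pre-Lie, satisfying the first pair of identities in the claim; it is an admissible Novikov-Poisson algebra if moreover $(A,\circ)$ is admissible Novikov. A Novikov algebra is $(A,\star)$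 with $(x\star y)\star z-x\star(y\star z)=(y\star x)\star z-y\star(x\star z)$ and $(x\star y)\star z=(x\star z)\star y$. A Novikov-Poisson algebra is $(A,\cdot,\star)$ with $(A,\cdot)$ commutative associative, $(A,\star)$ Novikov, satisfying the second pair of identities in the claim. *)

theory Defs
  imports Complex_Main
begin

definition bilinear_op :: "('k::field \<Rightarrow> 'a::ab_group_add \<Rightarrow> 'a) \<Rightarrow> ('a \<Rightarrow> 'a \<Rightarrow> 'a) \<Rightarrow> bool" where
  "bilinear_op scale f \<longleftrightarrow>
     (\<forall>x y z. f (x + y) z = f x z + f y z) \<and>
     (\<forall>x y z. f x (y + z) = f x y + f x z) \<and>
     (\<forall>c x y. f (scale c x) y = scale c (f x y)) \<and>
     (\<forall>c x y. f x (scale c y) = scale c (f x y))"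

definition finite_dim_space :: "('k::field \<Rightarrow> 'a::ab_group_add \<Rightarrow> 'a) \<Rightarrow> bool" where
  "finite_dim_space scale \<longleftrightarrow> (\<exists>B. finite_dimensional_vector_space scale B)"

definition comm_assoc_op :: "('a \<Rightarrow> 'a \<Rightarrow> 'a) \<Rightarrow> bool" where
  "comm_assoc_op m \<longleftrightarrow> (\<forall>x y. m x y = m y x) \<and> (\<forall>x y z. m (m x y) z = m x (m y z))"

definition commut :: "('a::ab_group_add \<Rightarrow> 'a \<Rightarrow> 'a) \<Rightarrow> 'a \<Rightarrow> 'a \<Rightarrow> 'a" where
  "commut c x y = c x y - c y x"

definition anti_pre_Lie :: "('a::ab_group_add \<Rightarrow> 'a \<Rightarrow> 'a) \<Rightarrow> bool" where
  "anti_pre_Lie c \<longleftrightarrow>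
     (\<forall>x y z. c x (c y z) - c y (c x z) = c (commut c y x) z) \<and>
     (\<forall>x y z. c (commut c x y) z + c (commut c y z) x + c (commut c z x) y = 0)"

definition admissible_Novikov :: "('k::field \<Rightarrow> 'a::ab_group_add \<Rightarrow> 'a) \<Rightarrow> ('a \<Rightarrow> 'a \<Rightarrow> 'a) \<Rightarrow> bool" where
  "admissible_Novikov scale c \<longleftrightarrow>
     (\<forall>x y z. c x (c y z) - c y (c x z) = c (commut c y x) z) \<and>
     (\<forall>x y z. scale 2 (c x (commut c y z)) = c (c x y) z - c (c x z) y)"

definition APLP_identities :: "('k::field \<Rightarrow> 'a::ab_group_add \<Rightarrow> 'a) \<Rightarrow> ('a \<Rightarrow> 'a \<Rightarrow> 'a) \<Rightarrow> ('a \<Rightarrow> 'a \<Rightarrow> 'a) \<Rightarrow> bool" where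
  "APLP_identities scale m c \<longleftrightarrow>
     (\<forall>x y z. scale 2 (m (c x y) z) - scale 2 (m (c y x) z) = m y (c x z) - m x (c y z)) \<and>
     (\<forall>x y z. scale 2 (c x (m y z)) = c (m z x) y + m z (c x y))"

definition NP_identities :: "('a::ab_group_add \<Rightarrow> 'a \<Rightarrow> 'a) \<Rightarrow> ('a \<Rightarrow> 'a \<Rightarrow> 'a) \<Rightarrow> bool" where
  "NP_identities m s \<longleftrightarrow>
     (\<forall>x y z. s (m x y) z = m x (s y z)) \<and>
     (\<forall>x y z. m (s x y) z - m (s y x) z = s x (m y z) - s y (m x z))"

definition anti_pre_Lie_Poisson :: "('k::field \<Rightarrow> 'a::ab_group_add \<Rightarrow> 'a) \<Rightarrow> ('a \<Rightarrow> 'a \<Rightarrow> 'a) \<Rightarrow> ('a \<Rightarrow> 'a \<Rightarrow> 'a) \<Rightarrow> bool" where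
  "anti_pre_Lie_Poisson scale m c \<longleftrightarrow>
     comm_assoc_op m \<and> anti_pre_Lie c \<and> APLP_identities scale m c"

definition admissible_Novikov_Poisson :: "('k::field \<Rightarrow> 'a::ab_group_add \<Rightarrow> 'a) \<Rightarrow> ('a \<Rightarrow> 'a \<Rightarrow> 'a) \<Rightarrow> ('a \<Rightarrow> 'a \<Rightarrow> 'a) \<Rightarrow> bool" where
  "admissible_Novikov_Poisson scale m c \<longleftrightarrow>
     anti_pre_Lie_Poisson scale m c \<and> admissible_Novikov scale c"

definition Novikov :: "('a::ab_group_add \<Rightarrow> 'a \<Rightarrow> 'a) \<Rightarrow> bool" where
  "Novikov s \<longleftrightarrow>
     (\<forall>x y z. s (s x y) z - s x (s y z) = s (s y x) z - s y (s x z)) \<and>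
     (\<forall>x y z. s (s x y) z = s (s x z) y)"

definition Novikov_Poisson :: "('a::ab_group_add \<Rightarrow> 'a \<Rightarrow> 'a) \<Rightarrow> ('a \<Rightarrow> 'a \<Rightarrow> 'a) \<Rightarrow> bool" where
  "Novikov_Poisson m s \<longleftrightarrow> comm_assoc_op m \<and> Novikov s \<and> NP_identities m s"

end

theory Submission
  imports Defs
begin

text \<open>Every identity involved is trilinear, and the operation \<open>\<star>\<close> determines \<open>\<circ>\<close> back
  through \<open>x \<star> y + 2 (y \<star> x) = -3 (x \<circ> y)\<close>. Writing each identity as the vanishing of a
  defect \<open>lhs - rhs\<close>, a small multiple (1, 2, 3 or 9) of every defect on one side is an integer
  combination of defects of the other side at permuted arguments; these relations are formal
  consequences of bilinearity and of the commutativity of \<open>\<cdot>\<close>. In characteristic 0 the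
  multiples can be divided out, which gives both equivalences; the same relations show that
  admissible Novikov algebras are anti-pre-Lie.\<close>

definition star_op :: "('k::field \<Rightarrow> 'a::ab_group_add \<Rightarrow> 'a) \<Rightarrow> ('a \<Rightarrow> 'a \<Rightarrow> 'a) \<Rightarrow> 'a \<Rightarrow> 'a \<Rightarrow> 'a"
  where "star_op scale c x y = c x y - scale 2 (c y x)"

text \<open>Numeral multiples are unfolded into repeated sums, so that the defect relations below
  become plain identities of abelian groups, normalised by \<open>algebra_simps\<close>.\<close>

lemma (in vector_space) scale_numeral_Bit0:
  "scale (numeral (Num.Bit0 n)) x = scale (numeral n) x + scale (numeral n) x"
  unfolding numeral_Bit0 by (rule scale_left_distrib)

lemma (in vector_space) scale_numeral_Bit1:
  "scale (numeral (Num.Bit1 n)) x = scale (numeral n) x + scale (numeral n) x + x"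
  unfolding numeral_Bit1 by (simp only: scale_left_distrib scale_one)

lemma bilinear_op_simps:
  assumes "bilinear_op scale f"
  shows "f (x + y) z = f x z + f y z" "f x (y + z) = f x y + f x z"
    and "f (x - y) z = f x z - f y z" "f x (y - z) = f x y - f x z"
    and "f (- x) z = - f x z" "f x (- z) = - f x z"
    and "f (scale a x) z = scale a (f x z)" "f x (scale a z) = scale a (f x z)"
proof -
  have add_left: "f (x + y) z = f x z + f y z" and add_right: "f x (y + z) = f x y + f x z" for x y z
    using assms unfolding bilinear_op_def by auto
  have minus_left: "f (- x) z = - f x z" for x z
    by (metis add_left add.right_inverse add_right_imp_eq minus_add_cancel)
  have minus_right: "f x (- z) = - f x z" for x z
    by (metis add_right add.right_inverse add_right_imp_eq minus_add_cancel)
  show "f (x + y) z = f x z + f y z" "f x (y + z) = f x y + f x z"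
    "f (- x) z = - f x z" "f x (- z) = - f x z"
    using add_left add_right minus_left minus_right by auto
  show "f (x - y) z = f x z - f y z" "f x (y - z) = f x y - f x z"
    using add_left[of x "- y"] add_right[of x y "- z"] minus_left minus_right by simp_all
  show "f (scale a x) z = scale a (f x z)" "f x (scale a z) = scale a (f x z)"
    using assms unfolding bilinear_op_def by auto
qed

definition aplp_defect_1 ::
    "('k::field \<Rightarrow> 'a::ab_group_add \<Rightarrow> 'a) \<Rightarrow> ('a \<Rightarrow> 'a \<Rightarrow> 'a) \<Rightarrow> ('a \<Rightarrow> 'a \<Rightarrow> 'a) \<Rightarrow> 'a \<Rightarrow> 'a \<Rightarrow> 'a \<Rightarrow> 'a"
  where "aplp_defect_1 scale m c x y z =
    scale 2 (m (c x y) z) - scale 2 (m (c y x) z) - (m y (c x z) - m x (c y z))"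

definition aplp_defect_2 ::
    "('k::field \<Rightarrow> 'a::ab_group_add \<Rightarrow> 'a) \<Rightarrow> ('a \<Rightarrow> 'a \<Rightarrow> 'a) \<Rightarrow> ('a \<Rightarrow> 'a \<Rightarrow> 'a) \<Rightarrow> 'a \<Rightarrow> 'a \<Rightarrow> 'a \<Rightarrow> 'a"
  where "aplp_defect_2 scale m c x y z = scale 2 (c x (m y z)) - (c (m z x) y + m z (c x y))"

definition np_defect_1 :: "('a::ab_group_add \<Rightarrow> 'a \<Rightarrow> 'a) \<Rightarrow> ('a \<Rightarrow> 'a \<Rightarrow> 'a) \<Rightarrow> 'a \<Rightarrow> 'a \<Rightarrow> 'a \<Rightarrow> 'a"
  where "np_defect_1 m s x y z = s (m x y) z - m x (s y z)"

definition np_defect_2 :: "('a::ab_group_add \<Rightarrow> 'a \<Rightarrow> 'a) \<Rightarrow> ('a \<Rightarrow> 'a \<Rightarrow> 'a) \<Rightarrow> 'a \<Rightarrow> 'a \<Rightarrow> 'a \<Rightarrow> 'a"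
  where "np_defect_2 m s x y z = m (s x y) z - m (s y x) z - (s x (m y z) - s y (m x z))"

definition apl_defect_1 :: "('a::ab_group_add \<Rightarrow> 'a \<Rightarrow> 'a) \<Rightarrow> 'a \<Rightarrow> 'a \<Rightarrow> 'a \<Rightarrow> 'a"
  where "apl_defect_1 c x y z = c x (c y z) - c y (c x z) - c (commut c y x) z"

definition apl_defect_2 :: "('a::ab_group_add \<Rightarrow> 'a \<Rightarrow> 'a) \<Rightarrow> 'a \<Rightarrow> 'a \<Rightarrow> 'a \<Rightarrow> 'a"
  where "apl_defect_2 c x y z = c (commut c x y) z + c (commut c y z) x + c (commut c z x) y"

definition adm_defect :: "('k::field \<Rightarrow> 'a::ab_group_add \<Rightarrow> 'a) \<Rightarrow> ('a \<Rightarrow> 'a \<Rightarrow> 'a) \<Rightarrow> 'a \<Rightarrow> 'a \<Rightarrow> 'a \<Rightarrow> 'a"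
  where "adm_defect scale c x y z = scale 2 (c x (commut c y z)) - (c (c x y) z - c (c x z) y)"

definition nov_defect_1 :: "('a::ab_group_add \<Rightarrow> 'a \<Rightarrow> 'a) \<Rightarrow> 'a \<Rightarrow> 'a \<Rightarrow> 'a \<Rightarrow> 'a"
  where "nov_defect_1 s x y z = s (s x y) z - s x (s y z) - (s (s y x) z - s y (s x z))"

definition nov_defect_2 :: "('a::ab_group_add \<Rightarrow> 'a \<Rightarrow> 'a) \<Rightarrow> 'a \<Rightarrow> 'a \<Rightarrow> 'a \<Rightarrow> 'a"
  where "nov_defect_2 s x y z = s (s x y) z - s (s x z) y"

lemma APLP_identities_iff_defects:
  "APLP_identities scale m c \<longleftrightarrow>
     (\<forall>x y z. aplp_defect_1 scale m c x y z = 0 \<and> aplp_defect_2 scale m c x y z = 0)"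
  by (auto simp: APLP_identities_def aplp_defect_1_def aplp_defect_2_def)

lemma NP_identities_iff_defects:
  "NP_identities m s \<longleftrightarrow> (\<forall>x y z. np_defect_1 m s x y z = 0 \<and> np_defect_2 m s x y z = 0)"
  by (auto simp: NP_identities_def np_defect_1_def np_defect_2_def)

lemma anti_pre_Lie_iff_defects:
  "anti_pre_Lie c \<longleftrightarrow> (\<forall>x y z. apl_defect_1 c x y z = 0 \<and> apl_defect_2 c x y z = 0)"
  by (auto simp: anti_pre_Lie_def apl_defect_1_def apl_defect_2_def)

lemma admissible_Novikov_iff_defects:
  "admissible_Novikov scale c \<longleftrightarrow> (\<forall>x y z. apl_defect_1 c x y z = 0 \<and> adm_defect scale c x y z = 0)"
  by (auto simp: admissible_Novikov_def apl_defect_1_def adm_defect_def)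

lemma Novikov_iff_defects:
  "Novikov s \<longleftrightarrow> (\<forall>x y z. nov_defect_1 s x y z = 0 \<and> nov_defect_2 s x y z = 0)"
  by (auto simp: Novikov_def nov_defect_1_def nov_defect_2_def)

context
  fixes scale :: "'k::field \<Rightarrow> 'a::ab_group_add \<Rightarrow> 'a" and m c :: "'a \<Rightarrow> 'a \<Rightarrow> 'a"
  assumes vs: "vector_space scale" and m: "bilinear_op scale m" and c: "bilinear_op scale c"
    and m_commute: "\<And>x y. m x y = m y x"
begin

interpretation vector_space scale by (rule vs)

private lemmas expand_poisson_defects = star_op_def aplp_defect_1_def aplp_defect_2_def np_defect_1_def np_defect_2_def
  bilinear_op_simps[OF m] bilinear_op_simps[OF c] scale_numeral_Bit0 scale_numeral_Bit1
  m_commute algebra_simps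

lemma np_defect_1_star_op_by_aplp_defects:
  "np_defect_1 m (star_op scale c) x y z =
     aplp_defect_2 scale m c y x z - aplp_defect_2 scale m c y z x - aplp_defect_2 scale m c z x y
     - aplp_defect_1 scale m c y z x"
  by (simp add: expand_poisson_defects)

lemma np_defect_2_star_op_by_aplp_defects:
  "scale 2 (np_defect_2 m (star_op scale c) x y z) =
     scale 5 (aplp_defect_1 scale m c x y z + aplp_defect_2 scale m c y z x - aplp_defect_2 scale m c x z y)
     + scale 4 (aplp_defect_2 scale m c x y z - aplp_defect_2 scale m c y x z)"
  by (simp add: expand_poisson_defects)

lemma aplp_defect_1_by_np_defects:
  "scale 3 (aplp_defect_1 scale m c x y z) =
     np_defect_1 m (star_op scale c) x y z - np_defect_1 m (star_op scale c) y x z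
     + scale 2 (np_defect_1 m (star_op scale c) x z y - np_defect_1 m (star_op scale c) y z x
       - np_defect_1 m (star_op scale c) z x y + np_defect_1 m (star_op scale c) z y x)"
  by (simp add: expand_poisson_defects)

lemma aplp_defect_2_by_np_defects:
  "scale 3 (aplp_defect_2 scale m c x y z) =
     np_defect_1 m (star_op scale c) z x y - scale 4 (np_defect_1 m (star_op scale c) z y x)
     + scale 2 (np_defect_2 m (star_op scale c) x y z)"
  by (simp add: expand_poisson_defects)

end

context
  fixes scale :: "'k::field \<Rightarrow> 'a::ab_group_add \<Rightarrow> 'a" and c :: "'a \<Rightarrow> 'a \<Rightarrow> 'a"
  assumes vs: "vector_space scale" and c: "bilinear_op scale c"
begin

interpretation vector_space scale by (rule vs)

private lemmas expand_novikov_defects = star_op_def apl_defect_1_def apl_defect_2_def adm_defect_def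
  nov_defect_1_def nov_defect_2_def commut_def
  bilinear_op_simps[OF c] scale_numeral_Bit0 scale_numeral_Bit1 algebra_simps

lemma nov_defect_1_star_op_by_adm_defects:
  "scale 3 (nov_defect_1 (star_op scale c) x y z) =
     scale 5 (apl_defect_1 c x y z) + scale 2 (apl_defect_1 c y z x - apl_defect_1 c x z y)
     + scale 4 (adm_defect scale c y x z - adm_defect scale c x y z)
     - scale 10 (adm_defect scale c z x y)"
  by (simp add: expand_novikov_defects)

lemma nov_defect_2_star_op_by_adm_defects:
  "scale 3 (nov_defect_2 (star_op scale c) x y z) =
     scale 2 (apl_defect_1 c x y z - apl_defect_1 c x z y) - scale 4 (apl_defect_1 c y z x)
     - adm_defect scale c x y z + scale 4 (adm_defect scale c y x z - adm_defect scale c z x y)"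
  by (simp add: expand_novikov_defects)

lemma apl_defect_2_by_adm_defects:
  "scale 3 (apl_defect_2 c x y z) =
     scale 2 (apl_defect_1 c x y z - apl_defect_1 c x z y + apl_defect_1 c y z x)
     - adm_defect scale c x y z + adm_defect scale c y x z - adm_defect scale c z x y"
  by (simp add: expand_novikov_defects)

lemma apl_defect_1_by_nov_defects:
  "scale 9 (apl_defect_1 c x y z) =
     scale 2 (nov_defect_1 (star_op scale c) y z x - nov_defect_1 (star_op scale c) x z y)
     - nov_defect_1 (star_op scale c) x y z - scale 6 (nov_defect_2 (star_op scale c) z x y)"
  by (simp add: expand_novikov_defects)

lemma adm_defect_by_nov_defects:
  "scale 9 (adm_defect scale c x y z) =
     scale 2 (nov_defect_1 (star_op scale c) x y z - nov_defect_1 (star_op scale c) x z y)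
     - scale 4 (nov_defect_1 (star_op scale c) y z x) - scale 3 (nov_defect_2 (star_op scale c) x y z)"
  by (simp add: expand_novikov_defects)

end

lemma APLP_identities_iff_NP_identities_star_op:
  fixes scale :: "'k::field_char_0 \<Rightarrow> 'a::ab_group_add \<Rightarrow> 'a" and m c :: "'a \<Rightarrow> 'a \<Rightarrow> 'a"
  assumes "vector_space scale" and "bilinear_op scale m" and "bilinear_op scale c"
    and "\<And>x y. m x y = m y x"
  shows "APLP_identities scale m c \<longleftrightarrow> NP_identities m (star_op scale c)"
proof -
  interpret vector_space scale by fact
  show ?thesis
  proof
    assume "APLP_identities scale m c"
    then have "aplp_defect_1 scale m c x y z = 0" "aplp_defect_2 scale m c x y z = 0" for x y z
      by (simp_all add: APLP_identities_iff_defects)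
    with np_defect_1_star_op_by_aplp_defects[OF assms] np_defect_2_star_op_by_aplp_defects[OF assms]
    show "NP_identities m (star_op scale c)"
      by (simp add: NP_identities_iff_defects)
  next
    assume "NP_identities m (star_op scale c)"
    then have "np_defect_1 m (star_op scale c) x y z = 0" "np_defect_2 m (star_op scale c) x y z = 0"
      for x y z
      by (simp_all add: NP_identities_iff_defects)
    with aplp_defect_1_by_np_defects[OF assms] aplp_defect_2_by_np_defects[OF assms]
    show "APLP_identities scale m c"
      by (simp add: APLP_identities_iff_defects)
  qed
qed

lemma admissible_Novikov_iff_Novikov_star_op:
  fixes scale :: "'k::field_char_0 \<Rightarrow> 'a::ab_group_add \<Rightarrow> 'a" and c :: "'a \<Rightarrow> 'a \<Rightarrow> 'a"
  assumes "vector_space scale" and "bilinear_op scale c"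
  shows "admissible_Novikov scale c \<longleftrightarrow> Novikov (star_op scale c)"
proof -
  interpret vector_space scale by fact
  show ?thesis
  proof
    assume "admissible_Novikov scale c"
    then have "apl_defect_1 c x y z = 0" "adm_defect scale c x y z = 0" for x y z
      by (simp_all add: admissible_Novikov_iff_defects)
    with nov_defect_1_star_op_by_adm_defects[OF assms] nov_defect_2_star_op_by_adm_defects[OF assms]
    show "Novikov (star_op scale c)"
      by (simp add: Novikov_iff_defects)
  next
    assume "Novikov (star_op scale c)"
    then have "nov_defect_1 (star_op scale c) x y z = 0" "nov_defect_2 (star_op scale c) x y z = 0"
      for x y z
      by (simp_all add: Novikov_iff_defects)
    with apl_defect_1_by_nov_defects[OF assms] adm_defect_by_nov_defects[OF assms]
    show "admissible_Novikov scale c"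
      by (simp add: admissible_Novikov_iff_defects)
  qed
qed

lemma anti_pre_Lie_if_admissible_Novikov:
  fixes scale :: "'k::field_char_0 \<Rightarrow> 'a::ab_group_add \<Rightarrow> 'a" and c :: "'a \<Rightarrow> 'a \<Rightarrow> 'a"
  assumes "vector_space scale" and "bilinear_op scale c" and "admissible_Novikov scale c"
  shows "anti_pre_Lie c"
proof -
  interpret vector_space scale by fact
  from assms(3) have "apl_defect_1 c x y z = 0" "adm_defect scale c x y z = 0" for x y z
    by (simp_all add: admissible_Novikov_iff_defects)
  with apl_defect_2_by_adm_defects[OF assms(1,2)] show ?thesis
    by (simp add: anti_pre_Lie_iff_defects)
qed

theorem proposition3p39:
  fixes scale :: "'k::field_char_0 \<Rightarrow> 'a::ab_group_add \<Rightarrow> 'a"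
    and mult circ star :: "'a \<Rightarrow> 'a \<Rightarrow> 'a"
  assumes "vector_space scale"
    and "finite_dim_space scale"
    and "bilinear_op scale mult"
    and "comm_assoc_op mult"
    and "bilinear_op scale circ"
    and "\<And>x y. star x y = circ x y - scale 2 (circ y x)"
  shows "(APLP_identities scale mult circ \<longleftrightarrow> NP_identities mult star)
         \<and> (admissible_Novikov_Poisson scale mult circ \<longleftrightarrow> Novikov_Poisson mult star)"
proof -
  have star: "star = star_op scale circ"
    by (intro ext) (simp add: assms(6) star_op_def)
  have "\<And>x y. mult x y = mult y x"
    using assms(4) by (simp add: comm_assoc_op_def)
  then have "APLP_identities scale mult circ \<longleftrightarrow> NP_identities mult star"
    unfolding star using APLP_identities_iff_NP_identities_star_op assms(1,3,5) by blast
  moreover have "admissible_Novikov scale circ \<longleftrightarrow> Novikov star"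
    unfolding star using admissible_Novikov_iff_Novikov_star_op assms(1,5) by blast
  moreover have "admissible_Novikov scale circ \<Longrightarrow> anti_pre_Lie circ"
    using anti_pre_Lie_if_admissible_Novikov assms(1,5) by blast
  ultimately show ?thesis
    using assms(4)
    unfolding admissible_Novikov_Poisson_def anti_pre_Lie_Poisson_def Novikov_Poisson_def
    by blast
qed

end
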